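(* Assume $l>-\infty$, $r=\infty$, (A2) ($\inf\operatorname{supp}\mu>-\infty$ and there is $y_0\in I$ with $\int_{\mathbb R_+}q(y_0,y_0+ax)\mu(dx)<\infty$ for all $a>0$), and $$\limsup_{x\searrow l}\frac{|\eta(x)|}{x-l}<\infty,\qquad \limsup_{x\nearrow\infty}\frac{|\eta(x)|}{x}<\infty.$$ Then $\liminf_{y\to\infty}G_y(\bar a(y))>0$ and $\liminf_{y\searrow l}G_y(\bar a(y))>0$.
   Context: Let $I=(l,r)$, $\eta\colon\mathbb R\to\mathbb R$ Borel with $\eta\ne0$ on $I$, $1/\eta^2\in L^1_{\mathrm{loc}}(I)$, $\eta=0$ off $I$. $q(y,x)=\int_y^x\int_y^u\frac{2}{\eta^2(z)}dz\,du\in[0,\infty]$ for $y\in I,x\in\mathbb R$. $\mu\ne\delta_0$ is a centered probability measure with finite first moment, $G_y(a)=\int q(y,y+ax)\mu(dx)$, and $\bar a(y)=\frac{l-y}{\inf\operatorname{supp}\mu}$ for $y\in I$. *)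

theory Defs
  imports "HOL-Probability.Probability"
begin

text \<open>The density 2/eta^2 as an extended nonnegative real; it is +infinity where eta = 0
  (i.e. off the interval I).\<close>
definition two_over_eta_sq :: "(real \<Rightarrow> real) \<Rightarrow> real \<Rightarrow> ennreal" where
  "two_over_eta_sq \<eta> z = (if \<eta> z = 0 then \<infinity> else ennreal (2 / (\<eta> z)^2))"

text \<open>q(y,x) = int_y^x int_y^u 2/eta^2(z) dz du, with oriented integrals (both signs flip
  when x < y, so the value is the nonnegative double integral over u between x and y).\<close>
definition qfun :: "(real \<Rightarrow> real) \<Rightarrow> real \<Rightarrow> real \<Rightarrow> ennreal" where
  "qfun \<eta> y x =
     (if y \<le> x then (\<integral>\<^sup>+ u\<in>{y..x}. (\<integral>\<^sup>+ z\<in>{y..u}. two_over_eta_sq \<eta> z \<partial>lborel) \<partial>lborel)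
      else (\<integral>\<^sup>+ u\<in>{x..y}. (\<integral>\<^sup>+ z\<in>{u..y}. two_over_eta_sq \<eta> z \<partial>lborel) \<partial>lborel))"

definition Gfun :: "(real \<Rightarrow> real) \<Rightarrow> real measure \<Rightarrow> real \<Rightarrow> real \<Rightarrow> ennreal" where
  "Gfun \<eta> \<mu> y a = (\<integral>\<^sup>+ x. qfun \<eta> y (y + a * x) \<partial>\<mu>)"

definition msupp :: "real measure \<Rightarrow> real set" where
  "msupp \<mu> = {x. \<forall>e>0. emeasure \<mu> {x - e<..<x + e} > 0}"

definition abar :: "real \<Rightarrow> real measure \<Rightarrow> real \<Rightarrow> real" where
  "abar l \<mu> y = (l - y) / Inf (msupp \<mu>)"

end

theory Submission
  imports Defs
begin

(* Let m = inf supp mu.  Since mu is centered and not the Dirac mass at 0,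
   it charges (-inf,0), hence m < 0 and mu charges {x < m/2}.  For such x and y > l the
   point y + abar(y) x = y + (l - y) x / m lies left of the midpoint (y+l)/2, so
     q(y, y + abar(y) x) >= Q(y) := int_{(y+l)/2}^y int_u^y 2/eta^2(z) dz du.
   If |eta| <= K on [(y+l)/2, y] then Q(y) >= (y-l)^2 / (8 K^2).  Both growth hypotheses
   give, eventually in the respective filter (y -> l+ and y -> infinity), a bound
   |eta| <= C (y - l) on [(y+l)/2, y]; then Q(y) >= 1/(8 C^2) and
   G_y(abar y) >= mu{x < m/2} / (8 C^2) > 0 eventually. *)

section \<open>Lower bounds for the double integral q\<close>

lemma two_over_eta_sq_lower:
  assumes "\<bar>\<eta> z\<bar> \<le> K" "K > 0"
  shows "ennreal (2 / K^2) \<le> two_over_eta_sq \<eta> z"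
proof (cases "\<eta> z = 0")
  case True
  thus ?thesis by (simp add: two_over_eta_sq_def)
next
  case False
  have "(\<eta> z)^2 \<le> K^2"
    using assms by (metis abs_ge_zero power2_abs power_mono)
  moreover have "(\<eta> z)^2 > 0" using False by simp
  ultimately have "2 / K^2 \<le> 2 / (\<eta> z)^2"
    using assms(2) by (intro divide_left_mono) auto
  thus ?thesis using False by (simp add: two_over_eta_sq_def ennreal_leI)
qed

lemma nn_integral_interval_lower:
  assumes "\<And>z. z \<in> {u..y} \<Longrightarrow> ennreal c \<le> f z" "u \<le> y" "c \<ge> 0"
  shows "ennreal (c * (y - u)) \<le> (\<integral>\<^sup>+ z\<in>{u..y}. f z \<partial>lborel)"
proof -
  have "ennreal (c * (y - u)) = (\<integral>\<^sup>+ z. ennreal c * indicator {u..y} z \<partial>lborel)"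
    using assms by (simp add: nn_integral_cmult_indicator ennreal_mult)
  also have "\<dots> \<le> (\<integral>\<^sup>+ z\<in>{u..y}. f z \<partial>lborel)"
    by (intro nn_integral_mono) (auto simp: indicator_def assms(1))
  finally show ?thesis .
qed

text \<open>The part of q(y,.) coming from the right half [(y+l)/2, y] of [l,y]: it is
  bounded below by (y-l)^2/(8K^2) whenever |eta| <= K there.  (Only the left half
  [(y+l)/2, (3y+l)/4] of the outer variable is used, on which the inner integral is
  at least 2/K^2 times (y-l)/4.)\<close>
lemma half_interval_integral_lower:
  assumes "l < y" "K > 0" "\<And>z. z \<in> {(y+l)/2..y} \<Longrightarrow> \<bar>\<eta> z\<bar> \<le> K"
  shows "ennreal ((y - l)^2 / (8 * K^2)) \<le>
    (\<integral>\<^sup>+ u\<in>{(y+l)/2..y}. (\<integral>\<^sup>+ z\<in>{u..y}. two_over_eta_sq \<eta> z \<partial>lborel) \<partial>lborel)"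
proof -
  define a where "a = (y + l) / 2"
  define m where "m = (a + y) / 2"
  define c where "c = 2 / K^2"
  have c0: "c \<ge> 0" unfolding c_def by simp
  have inner: "ennreal (c * ((y - a) / 2)) \<le> (\<integral>\<^sup>+ z\<in>{u..y}. two_over_eta_sq \<eta> z \<partial>lborel)"
    if u: "u \<in> {a..m}" for u
  proof -
    have "c * ((y - a) / 2) \<le> c * (y - u)"
      using u c0 unfolding m_def by (intro mult_left_mono) auto
    hence "ennreal (c * ((y - a) / 2)) \<le> ennreal (c * (y - u))" by (rule ennreal_leI)
    also have "\<dots> \<le> (\<integral>\<^sup>+ z\<in>{u..y}. two_over_eta_sq \<eta> z \<partial>lborel)"
    proof (unfold c_def, intro nn_integral_interval_lower two_over_eta_sq_lower)
      show "u \<le> y" using u assms(1) unfolding a_def m_def by (auto simp: field_simps)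
      fix z assume "z \<in> {u..y}"
      thus "\<bar>\<eta> z\<bar> \<le> K" using u assms unfolding a_def m_def by auto
    qed (use assms in auto)
    finally show ?thesis .
  qed
  have "(y - l)^2 / (8 * K^2) = c * ((y - a) / 2) * (m - a)"
    using assms unfolding a_def m_def c_def by (simp add: field_simps power2_eq_square)
  moreover have "c * ((y - a) / 2) \<ge> 0" "m - a \<ge> 0"
    using assms c0 unfolding a_def m_def by auto
  ultimately have "ennreal ((y - l)^2 / (8 * K^2)) = ennreal (c * ((y - a) / 2)) * ennreal (m - a)"
    by (simp only: ennreal_mult)
  also have "\<dots> = (\<integral>\<^sup>+ u. ennreal (c * ((y - a) / 2)) * indicator {a..m} u \<partial>lborel)"
    using assms unfolding a_def m_def by (simp add: nn_integral_cmult_indicator)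
  also have "\<dots> \<le> (\<integral>\<^sup>+ u\<in>{a..y}. (\<integral>\<^sup>+ z\<in>{u..y}. two_over_eta_sq \<eta> z \<partial>lborel) \<partial>lborel)"
    using inner by (intro nn_integral_mono) (auto simp: indicator_def m_def)
  finally show ?thesis unfolding a_def .
qed

lemma qfun_ge_half_interval_integral:
  assumes "w \<le> (y + l) / 2" "l < y"
  shows "(\<integral>\<^sup>+ u\<in>{(y+l)/2..y}. (\<integral>\<^sup>+ z\<in>{u..y}. two_over_eta_sq \<eta> z \<partial>lborel) \<partial>lborel)
         \<le> qfun \<eta> y w"
proof -
  have "\<not> y \<le> w" using assms by simp
  hence "qfun \<eta> y w = (\<integral>\<^sup>+ u\<in>{w..y}. (\<integral>\<^sup>+ z\<in>{u..y}. two_over_eta_sq \<eta> z \<partial>lborel) \<partial>lborel)"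
    by (simp add: qfun_def)
  moreover have "(\<integral>\<^sup>+ u\<in>{(y+l)/2..y}. (\<integral>\<^sup>+ z\<in>{u..y}. two_over_eta_sq \<eta> z \<partial>lborel) \<partial>lborel)
     \<le> (\<integral>\<^sup>+ u\<in>{w..y}. (\<integral>\<^sup>+ z\<in>{u..y}. two_over_eta_sq \<eta> z \<partial>lborel) \<partial>lborel)"
    using assms by (intro nn_integral_mono) (auto simp: indicator_def)
  ultimately show ?thesis by simp
qed

section \<open>The measure mu charges the left part of its support\<close>

lemma centered_charges_negatives:
  fixes \<mu> :: "real measure"
  assumes prob: "prob_space \<mu>" and sets_mu: "sets \<mu> = sets borel"
    and first_moment: "integrable \<mu> (\<lambda>x. x)" and centered: "(\<integral>x. x \<partial>\<mu>) = 0"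
    and not_dirac: "\<mu> \<noteq> return borel 0"
  shows "emeasure \<mu> {x. x < 0} > 0"
proof (rule ccontr)
  interpret prob_space \<mu> by (rule prob)
  have space: "space \<mu> = UNIV" using sets_eq_imp_space_eq[OF sets_mu] by simp
  assume "\<not> ?thesis"
  hence null: "emeasure \<mu> {x. x < 0} = 0" by simp
  have "AE x in \<mu>. 0 \<le> x"
    by (subst AE_iff_measurable[of "{x. x < 0}"]) (auto simp: sets_mu space null)
  hence at_zero: "AE x in \<mu>. x = 0"
    using integral_nonneg_eq_0_iff_AE[OF first_moment] centered by simp
  have "\<mu> = return borel 0"
  proof (rule measure_eqI)
    show "sets \<mu> = sets (return borel 0)" by (simp add: sets_mu)
    fix A assume A: "A \<in> sets \<mu>"
    show "emeasure \<mu> A = emeasure (return borel 0) A"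
    proof (cases "0 \<in> A")
      case True
      have "AE x in \<mu>. x \<in> A" using at_zero by eventually_elim (use True in auto)
      thus ?thesis using emeasure_eq_1_AE[OF A] True A sets_mu by simp
    next
      case False
      have "AE x in \<mu>. x \<notin> A" using at_zero by eventually_elim (use False in auto)
      hence "emeasure \<mu> A = 0"
        by (subst (asm) AE_iff_measurable[of A]) (auto simp: A space)
      thus ?thesis using False A sets_mu by simp
    qed
  qed
  thus False using not_dirac by simp
qed

text \<open>If mu charges (-inf,c), then its support meets (-inf,c): otherwise (-inf,c) is
  covered by countably many null intervals with rational endpoints.\<close>
lemma msupp_meets_charged_halfline:
  assumes sets_mu: "sets \<mu> = sets borel" and pos: "emeasure \<mu> {x. x < c} > 0"
  shows "\<exists>s\<in>msupp \<mu>. s < c"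
proof (rule ccontr)
  assume "\<not> ?thesis"
  hence outside: "\<And>x. x < c \<Longrightarrow> \<exists>e>0. emeasure \<mu> {x - e<..<x + e} = 0"
    unfolding msupp_def by (force simp: not_less)
  define N where
    "N = {pq::real \<times> real. fst pq \<in> \<rat> \<and> snd pq \<in> \<rat> \<and> emeasure \<mu> {fst pq<..<snd pq} = 0}"
  have "N \<subseteq> \<rat> \<times> \<rat>" unfolding N_def by auto
  hence "countable N" by (meson countable_SIGMA countable_rat countable_subset)
  hence null: "(\<Union>pq\<in>N. {fst pq<..<snd pq}) \<in> null_sets \<mu>"
    by (rule null_sets_UN') (auto simp: N_def sets_mu null_sets_def)
  have cover: "{x. x < c} \<subseteq> (\<Union>pq\<in>N. {fst pq<..<snd pq})"
  proof
    fix x assume "x \<in> {x. x < c}"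
    then obtain e where e: "e > 0" "emeasure \<mu> {x - e<..<x + e} = 0" using outside by auto
    obtain p where p: "p \<in> \<rat>" "x - e < p" "p < x" using Rats_dense_in_real[of "x - e" x] e by auto
    obtain q where q: "q \<in> \<rat>" "x < q" "q < x + e" using Rats_dense_in_real[of x "x + e"] e by auto
    have "emeasure \<mu> {p<..<q} \<le> emeasure \<mu> {x - e<..<x + e}"
      using p q by (intro emeasure_mono) (auto simp: sets_mu)
    hence "(p, q) \<in> N" using p q e unfolding N_def by auto
    thus "x \<in> (\<Union>pq\<in>N. {fst pq<..<snd pq})" using p q by force
  qed
  have "{x. x < c} \<in> null_sets \<mu>"
    by (rule null_sets_subset[OF null _ cover]) (simp add: sets_mu)
  thus False using pos by (auto dest: null_setsD1)
qed

lemma inf_msupp_negative_and_charged: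
  assumes sets_mu: "sets \<mu> = sets borel" and bdd: "bdd_below (msupp \<mu>)"
    and neg: "emeasure \<mu> {x. x < 0} > 0"
  shows "Inf (msupp \<mu>) < 0" and "emeasure \<mu> {x. x < Inf (msupp \<mu>) / 2} > 0"
proof -
  define m where "m = Inf (msupp \<mu>)"
  obtain s0 where s0: "s0 \<in> msupp \<mu>" "s0 < 0"
    using msupp_meets_charged_halfline[OF sets_mu neg] by auto
  show m0: "Inf (msupp \<mu>) < 0" using cInf_lower[OF s0(1) bdd] s0(2) by simp
  have "m < m / 2" using m0 unfolding m_def by simp
  then obtain s where s: "s \<in> msupp \<mu>" "s < m / 2"
    using s0(1) bdd by (metis cInf_less_iff empty_iff m_def)
  moreover have "m / 2 - s > 0" using s(2) by simp
  ultimately have "emeasure \<mu> {s - (m/2 - s)<..<s + (m/2 - s)} > 0" unfolding msupp_def by blast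
  also have "\<dots> \<le> emeasure \<mu> {x. x < m / 2}"
    by (intro emeasure_mono) (auto simp: sets_mu)
  finally show "emeasure \<mu> {x. x < Inf (msupp \<mu>) / 2} > 0" unfolding m_def .
qed

section \<open>Positivity of the liminf along a filter\<close>

text \<open>Pointwise in y: every x < m/2 is moved by y + abar(y) x left of (y+l)/2, so G_y(abar y)
  is at least the half-interval integral times the mass of {x < m/2}.\<close>
lemma Gfun_abar_lower:
  assumes sets_mu: "sets \<mu> = sets borel" and m0: "Inf (msupp \<mu>) < 0" and ly: "l < y"
  shows "(\<integral>\<^sup>+ u\<in>{(y+l)/2..y}. (\<integral>\<^sup>+ z\<in>{u..y}. two_over_eta_sq \<eta> z \<partial>lborel) \<partial>lborel)
           * emeasure \<mu> {x. x < Inf (msupp \<mu>) / 2}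
         \<le> Gfun \<eta> \<mu> y (abar l \<mu> y)"
    (is "?Q * emeasure \<mu> ?L \<le> _")
proof -
  define m where "m = Inf (msupp \<mu>)"
  have pointwise: "?Q * indicator ?L x \<le> qfun \<eta> y (y + (l - y) / m * x)" for x
  proof (cases "x \<in> ?L")
    case True
    have "(l - y) / m \<ge> 0" using m0 ly unfolding m_def by (simp add: divide_nonpos_neg)
    hence "(l - y) / m * x \<le> (l - y) / m * (m / 2)"
      using True unfolding m_def by (intro mult_left_mono) auto
    also have "\<dots> = (l - y) / 2" using m0 unfolding m_def by simp
    finally have "y + (l - y) / m * x \<le> (y + l) / 2" by simp
    thus ?thesis using True qfun_ge_half_interval_integral[OF _ ly] by simp
  qed simp
  have "?Q * emeasure \<mu> ?L = (\<integral>\<^sup>+ x. ?Q * indicator ?L x \<partial>\<mu>)"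
    by (rule nn_integral_cmult_indicator[symmetric]) (simp add: sets_mu)
  also have "\<dots> \<le> (\<integral>\<^sup>+ x. qfun \<eta> y (y + (l - y) / m * x) \<partial>\<mu>)"
    by (intro nn_integral_mono pointwise)
  finally show ?thesis unfolding Gfun_def abar_def m_def by (simp add: mult.commute)
qed

lemma Liminf_Gfun_abar_pos:
  assumes sets_mu: "sets \<mu> = sets borel" and m0: "Inf (msupp \<mu>) < 0"
    and charged: "emeasure \<mu> {x. x < Inf (msupp \<mu>) / 2} > 0" and C0: "C > 0"
    and growth: "eventually (\<lambda>y. l < y \<and> (\<forall>z\<in>{(y+l)/2..y}. \<bar>\<eta> z\<bar> \<le> C * (y - l))) F"
  shows "Liminf F (\<lambda>y. Gfun \<eta> \<mu> y (abar l \<mu> y)) > 0"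
proof -
  define b where "b = ennreal (1 / (8 * C^2)) * emeasure \<mu> {x. x < Inf (msupp \<mu>) / 2}"
  have b_pos: "b > 0" using charged C0 unfolding b_def by (simp add: ennreal_zero_less_mult_iff)
  have "eventually (\<lambda>y. b \<le> Gfun \<eta> \<mu> y (abar l \<mu> y)) F"
    using growth
  proof eventually_elim
    case (elim y)
    hence ly: "l < y" and bound: "\<And>z. z \<in> {(y+l)/2..y} \<Longrightarrow> \<bar>\<eta> z\<bar> \<le> C * (y - l)" by auto
    have "1 / (8 * C^2) = (y - l)^2 / (8 * (C * (y - l))^2)"
      using ly C0 by (simp add: power_mult_distrib)
    hence "ennreal (1 / (8 * C^2)) \<le>
        (\<integral>\<^sup>+ u\<in>{(y+l)/2..y}. (\<integral>\<^sup>+ z\<in>{u..y}. two_over_eta_sq \<eta> z \<partial>lborel) \<partial>lborel)"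
      using half_interval_integral_lower[OF ly _ bound] ly C0 by simp
    hence "b \<le> (\<integral>\<^sup>+ u\<in>{(y+l)/2..y}. (\<integral>\<^sup>+ z\<in>{u..y}. two_over_eta_sq \<eta> z \<partial>lborel) \<partial>lborel)
              * emeasure \<mu> {x. x < Inf (msupp \<mu>) / 2}"
      unfolding b_def by (rule mult_right_mono) simp
    also have "\<dots> \<le> Gfun \<eta> \<mu> y (abar l \<mu> y)" by (rule Gfun_abar_lower[OF sets_mu m0 ly])
    finally show ?case .
  qed
  hence "b \<le> Liminf F (\<lambda>y. Gfun \<eta> \<mu> y (abar l \<mu> y))" by (rule Liminf_bounded)
  with b_pos show ?thesis by (rule order.strict_trans2)
qed

section \<open>Linear growth bounds on eta\<close>

lemma Limsup_finite_eventually_less: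
  assumes "Limsup F f < \<infinity>"
  obtains C :: real where "C > 0" "eventually (\<lambda>x. f x < ereal C) F"
proof -
  obtain n :: nat where n: "Limsup F f < ereal (real n)"
    using assms less_PInf_Ex_of_nat by auto
  have "eventually (\<lambda>x. f x < ereal (real n + 1)) F"
    by (rule Limsup_lessD) (use n in \<open>auto intro: order.strict_trans\<close>)
  thus ?thesis by (intro that[of "real n + 1"]) auto
qed

lemma eta_bound_near_l:
  assumes "Limsup (at_right l) (\<lambda>x. ereal (\<bar>\<eta> x\<bar> / (x - l))) < \<infinity>"
  obtains C where "C > 0"
    "eventually (\<lambda>y. l < y \<and> (\<forall>z\<in>{(y+l)/2..y}. \<bar>\<eta> z\<bar> \<le> C * (y - l))) (at_right l)"
proof -
  obtain C where C0: "C > 0"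
    and "eventually (\<lambda>x. ereal (\<bar>\<eta> x\<bar> / (x - l)) < ereal C) (at_right l)"
    using Limsup_finite_eventually_less[OF assms] by blast
  then obtain b where b: "b > l" "\<And>x. l < x \<Longrightarrow> x < b \<Longrightarrow> \<bar>\<eta> x\<bar> / (x - l) < C"
    unfolding eventually_at_right_field by auto
  have "\<bar>\<eta> z\<bar> \<le> C * (y - l)" if y: "l < y" "y < b" and z: "z \<in> {(y+l)/2..y}" for y z
  proof -
    have "l < z" "z < b" using y z by auto
    hence "\<bar>\<eta> z\<bar> \<le> C * (z - l)" using b(2)[of z] by (simp add: divide_less_eq)
    also have "\<dots> \<le> C * (y - l)" using z C0 by (intro mult_left_mono) auto
    finally show ?thesis .
  qed
  hence "eventually (\<lambda>y. l < y \<and> (\<forall>z\<in>{(y+l)/2..y}. \<bar>\<eta> z\<bar> \<le> C * (y - l))) (at_right l)"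
    unfolding eventually_at_right_field using b(1) by blast
  with C0 show ?thesis by (rule that)
qed

text \<open>Linear growth at infinity: |eta z| <= C z for large z gives, for large y,
  |eta| <= C y <= 2C (y - l) on [(y+l)/2, y].\<close>
lemma eta_bound_at_top:
  assumes "Limsup at_top (\<lambda>x. ereal (\<bar>\<eta> x\<bar> / x)) < \<infinity>"
  obtains C where "C > 0"
    "eventually (\<lambda>y. l < y \<and> (\<forall>z\<in>{(y+l)/2..y}. \<bar>\<eta> z\<bar> \<le> C * (y - l))) at_top"
proof -
  obtain C where C0: "C > 0"
    and "eventually (\<lambda>x. ereal (\<bar>\<eta> x\<bar> / x) < ereal C) at_top"
    using Limsup_finite_eventually_less[OF assms] by blast
  then obtain N where N: "\<And>x. x \<ge> N \<Longrightarrow> \<bar>\<eta> x\<bar> / x < C"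
    unfolding eventually_at_top_linorder by auto
  define N' where "N' = max N 1"
  have "l < y \<and> (\<forall>z\<in>{(y+l)/2..y}. \<bar>\<eta> z\<bar> \<le> 2 * C * (y - l))"
    if y: "y \<ge> max (2 * N' - l) (2 * \<bar>l\<bar> + 1)" for y
  proof (intro conjI ballI)
    show "l < y" using y by auto
    fix z assume z: "z \<in> {(y+l)/2..y}"
    have "z \<ge> N" "z > 0" using y z unfolding N'_def by auto
    hence "\<bar>\<eta> z\<bar> \<le> C * z" using N[of z] by (simp add: divide_less_eq)
    also have "\<dots> \<le> C * (2 * (y - l))" using z y C0 by (intro mult_left_mono) auto
    finally show "\<bar>\<eta> z\<bar> \<le> 2 * C * (y - l)" by (simp add: algebra_simps)
  qed
  hence "eventually (\<lambda>y. l < y \<and> (\<forall>z\<in>{(y+l)/2..y}. \<bar>\<eta> z\<bar> \<le> 2 * C * (y - l))) at_top"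
    unfolding eventually_at_top_linorder by blast
  thus ?thesis using C0 by (intro that[of "2 * C"]) auto
qed

theorem mainTheorem8:
  fixes \<eta> :: "real \<Rightarrow> real" and l :: real and \<mu> :: "real measure"
  assumes eta_borel: "\<eta> \<in> borel_measurable borel"
    and eta_nz: "\<And>x. x > l \<Longrightarrow> \<eta> x \<noteq> 0"
    and eta_off: "\<And>x. x \<le> l \<Longrightarrow> \<eta> x = 0"
    and loc_int: "\<And>a b. l < a \<Longrightarrow> a \<le> b \<Longrightarrow> set_integrable lborel {a..b} (\<lambda>z. 1 / (\<eta> z)^2)"
    and prob: "prob_space \<mu>"
    and sets_mu: "sets \<mu> = sets borel"
    and first_moment: "integrable \<mu> (\<lambda>x. x)"
    and centered: "(\<integral>x. x \<partial>\<mu>) = 0"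
    and not_dirac: "\<mu> \<noteq> return borel 0"
    and A2_bdd: "bdd_below (msupp \<mu>)"
    and A2_int: "\<exists>y0>l. \<forall>a>0. (\<integral>\<^sup>+ x\<in>{0..}. qfun \<eta> y0 (y0 + a * x) \<partial>\<mu>) < \<infinity>"
    and growth_l: "Limsup (at_right l) (\<lambda>x. ereal (\<bar>\<eta> x\<bar> / (x - l))) < \<infinity>"
    and growth_inf: "Limsup at_top (\<lambda>x. ereal (\<bar>\<eta> x\<bar> / x)) < \<infinity>"
  shows "Liminf at_top (\<lambda>y. Gfun \<eta> \<mu> y (abar l \<mu> y)) > 0
       \<and> Liminf (at_right l) (\<lambda>y. Gfun \<eta> \<mu> y (abar l \<mu> y)) > 0"
proof -
  have neg: "emeasure \<mu> {x. x < 0} > 0"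
    by (rule centered_charges_negatives[OF prob sets_mu first_moment centered not_dirac])
  note m0 = inf_msupp_negative_and_charged(1)[OF sets_mu A2_bdd neg]
  note charged = inf_msupp_negative_and_charged(2)[OF sets_mu A2_bdd neg]
  obtain C1 where "C1 > 0"
    "eventually (\<lambda>y. l < y \<and> (\<forall>z\<in>{(y+l)/2..y}. \<bar>\<eta> z\<bar> \<le> C1 * (y - l))) at_top"
    using eta_bound_at_top[OF growth_inf] by blast
  hence at_top: "Liminf at_top (\<lambda>y. Gfun \<eta> \<mu> y (abar l \<mu> y)) > 0"
    by (rule Liminf_Gfun_abar_pos[OF sets_mu m0 charged])
  obtain C2 where "C2 > 0"
    "eventually (\<lambda>y. l < y \<and> (\<forall>z\<in>{(y+l)/2..y}. \<bar>\<eta> z\<bar> \<le> C2 * (y - l))) (at_right l)"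
    using eta_bound_near_l[OF growth_l] by blast
  hence at_l: "Liminf (at_right l) (\<lambda>y. Gfun \<eta> \<mu> y (abar l \<mu> y)) > 0"
    by (rule Liminf_Gfun_abar_pos[OF sets_mu m0 charged])
  from at_top at_l show ?thesis ..
qed

end
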